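(* Let $f=f_1\wedge\dots\wedge f_r\in\wedge^rS_m$, let $w=(w_0,\dots,w_n)\in\mathbb Z^{n+1}$ be a weight vector with $w_0>w_1>\dots>w_n$ which distinguishes monomials in degree $rm$, and for $t\neq0$ let $\lambda(t)$ be the diagonal matrix with diagonal entries $t^{-w_0},\dots,t^{-w_n}$. Let $h\in\mathrm{GL}(n+1,K)$ be upper-triangular and let $g\in U(f)$. Then for every integer $N$, $$\operatorname{supp}\big(h\cdot(\lambda(t)gf)_{\ge N}\big)=\operatorname{supp}\big((\lambda(t)gf)_{\ge N}\big)$$ for all but finitely many $t\in K\setminus\{0\}$.
   Context: $K$ algebraically closed of characteristic $0$, $S=K[x_0,\dots,x_n]$, $S_m$ its degree-$m$ part; $g=(a_{ij})\in\mathrm{GL}(n+1,K)$ acts on $S$ by $x_i\mapsto\sum_ja_{ji}x_j$, and on $\wedge^rS_m$ by $g(f_1\wedge\dots\wedge f_r)=gf_1\wedge\dots\wedge gf_r$. A state is a wedge product $\mathbf x^{B_1}\wedge\dots\wedge\mathbf x^{B_r}$ of $r$ pairwise distinct degree-$m$ monomials; two states are equivalent if they differ by a reordering (hence by a sign). Every $F\in\wedge^rS_m$ is uniquely a linear combination of states (one representative per equivalence class); $\operatorname{supp}(F)$ is the set of states occurring with nonzero coefficient. The weight of the state (and of the corresponding term) is $w\cdot(B_1+\dots+B_r)$. For an integer $N$, $F_{\ge N}$ is the sum of the terms of $F$ of weight $\ge N$. A weight vector $w$ distinguishes monomials in degree $d$ if $w\cdot A\neq w\cdot B$ for all distinct $A,B\in\mathbb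 N^{n+1}$ of degree $d$. $U(f)$: let $G$ be the $(n+1)\times(n+1)$ matrix of indeterminates $G_{ij}$ and expand $Gf$ as a linear combination of states with coefficients polynomials in the $G_{ij}$; $U(f)\subseteq\mathrm{GL}(n+1,K)$ is the open set where none of those coefficient polynomials that are not identically zero vanish. *)

theory Defs
  imports Main "HOL-Library.Poly_Mapping" "HOL-Combinatorics.Permutations"
    "HOL-Computational_Algebra.Polynomial"
begin

(* Monomials x^A in x_0..x_n are exponent vectors A :: nat \<Rightarrow>\<^sub>0 nat;
  polynomials over a ring 'b are ((nat \<Rightarrow>\<^sub>0 nat) \<Rightarrow>\<^sub>0 'b).
  Matrices are functions nat \<Rightarrow> nat \<Rightarrow> 'b; only indices 0..n matter. *)

type_synonym mono = "nat \<Rightarrow>\<^sub>0 nat"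
type_synonym 'b mpoly = "mono \<Rightarrow>\<^sub>0 'b"

definition algebraically_closed :: "'a::field itself \<Rightarrow> bool" where
  "algebraically_closed _ \<longleftrightarrow> (\<forall>p::'a poly. degree p \<noteq> 0 \<longrightarrow> (\<exists>x. poly p x = 0))"

definition monos_deg :: "nat \<Rightarrow> nat \<Rightarrow> mono set" where
  "monos_deg n m = {A. Poly_Mapping.keys A \<subseteq> {..n} \<and> (\<Sum>i\<le>n. Poly_Mapping.lookup A i) = m}"

definition forms :: "nat \<Rightarrow> nat \<Rightarrow> ('b::zero) mpoly set" where
  "forms n m = {p. Poly_Mapping.keys p \<subseteq> monos_deg n m}"

definition monom :: "mono \<Rightarrow> ('b::{zero,one}) mpoly" where
  "monom A = Poly_Mapping.single A 1"

definition var :: "nat \<Rightarrow> ('b::{zero,one}) mpoly" where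
  "var i = monom (Poly_Mapping.single i 1)"

definition const :: "'b::zero \<Rightarrow> 'b mpoly" where
  "const c = Poly_Mapping.single 0 c"

definition act :: "nat \<Rightarrow> (nat \<Rightarrow> nat \<Rightarrow> 'b::comm_ring_1) \<Rightarrow> 'b mpoly \<Rightarrow> 'b mpoly" where
  "act n g p = (\<Sum>A\<in>Poly_Mapping.keys p. const (Poly_Mapping.lookup p A) *
       (\<Prod>i\<le>n. (\<Sum>j\<le>n. const (g j i) * var j) ^ Poly_Mapping.lookup A i))"

definition mdet :: "nat \<Rightarrow> (nat \<Rightarrow> nat \<Rightarrow> 'b::comm_ring_1) \<Rightarrow> 'b" where
  "mdet k M = (\<Sum>\<sigma> | \<sigma> permutes {..<k}. of_int (sign \<sigma>) * (\<Prod>i<k. M i (\<sigma> i)))"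

definition mmul :: "nat \<Rightarrow> (nat \<Rightarrow> nat \<Rightarrow> 'b::comm_ring_1) \<Rightarrow> (nat \<Rightarrow> nat \<Rightarrow> 'b) \<Rightarrow> (nat \<Rightarrow> nat \<Rightarrow> 'b)" where
  "mmul n A B = (\<lambda>i j. \<Sum>k\<le>n. A i k * B k j)"

definition GL :: "nat \<Rightarrow> (nat \<Rightarrow> nat \<Rightarrow> 'b::field) set" where
  "GL n = {g. mdet (Suc n) g \<noteq> 0}"

definition upper_tri :: "nat \<Rightarrow> (nat \<Rightarrow> nat \<Rightarrow> 'b::zero) \<Rightarrow> bool" where
  "upper_tri n h \<longleftrightarrow> (\<forall>i\<le>n. \<forall>j<i. h i j = 0)"

(* The state with monomial set S
  stands for the wedge x^{B_1} \<and> ... \<and> x^{B_r}, B_1 < ... < B_r in the (fixed)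
  linear order of poly_mapping. An element of \<and>^r S_m is given by its coefficient
  function on states. *)
definition states :: "nat \<Rightarrow> nat \<Rightarrow> nat \<Rightarrow> mono set set" where
  "states n m r = {S. S \<subseteq> monos_deg n m \<and> card S = r}"

definition rep :: "mono set \<Rightarrow> mono list" where
  "rep S = sorted_list_of_set S"

definition wedge :: "nat \<Rightarrow> nat \<Rightarrow> nat \<Rightarrow> ('b::comm_ring_1) mpoly list \<Rightarrow> mono set \<Rightarrow> 'b" where
  "wedge n m r fs S = (if S \<in> states n m r
      then mdet r (\<lambda>i j. Poly_Mapping.lookup (fs ! i) (rep S ! j)) else 0)"

(* action of h on a general element F of \<and>^r S_m (linear extension of
  h(f_1 \<and> ... \<and> f_r) = hf_1 \<and> ... \<and> hf_r) *)
definition actW :: "nat \<Rightarrow> nat \<Rightarrow> nat \<Rightarrow> (nat \<Rightarrow> nat \<Rightarrow> 'b::comm_ring_1)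
     \<Rightarrow> (mono set \<Rightarrow> 'b) \<Rightarrow> (mono set \<Rightarrow> 'b)" where
  "actW n m r h F = (\<lambda>C. \<Sum>S\<in>states n m r.
      F S * wedge n m r (map (\<lambda>B. act n h (monom B)) (rep S)) C)"

definition supp :: "nat \<Rightarrow> nat \<Rightarrow> nat \<Rightarrow> (mono set \<Rightarrow> 'b::zero) \<Rightarrow> mono set set" where
  "supp n m r F = {S \<in> states n m r. F S \<noteq> 0}"

definition wdot :: "nat \<Rightarrow> (nat \<Rightarrow> int) \<Rightarrow> mono \<Rightarrow> int" where
  "wdot n w A = (\<Sum>i\<le>n. w i * int (Poly_Mapping.lookup A i))"

definition sweight :: "nat \<Rightarrow> (nat \<Rightarrow> int) \<Rightarrow> mono set \<Rightarrow> int" where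
  "sweight n w S = (\<Sum>B\<in>S. wdot n w B)"

definition trunc :: "nat \<Rightarrow> (nat \<Rightarrow> int) \<Rightarrow> int \<Rightarrow> (mono set \<Rightarrow> 'b::zero) \<Rightarrow> (mono set \<Rightarrow> 'b)" where
  "trunc n w N F = (\<lambda>S. if sweight n w S \<ge> N then F S else 0)"

definition distinguishes :: "nat \<Rightarrow> (nat \<Rightarrow> int) \<Rightarrow> nat \<Rightarrow> bool" where
  "distinguishes n w d \<longleftrightarrow> (\<forall>A\<in>monos_deg n d. \<forall>B\<in>monos_deg n d. A \<noteq> B \<longrightarrow> wdot n w A \<noteq> wdot n w B)"

definition lam :: "(nat \<Rightarrow> int) \<Rightarrow> 'a::field \<Rightarrow> (nat \<Rightarrow> nat \<Rightarrow> 'a)" where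
  "lam w t = (\<lambda>i j. if i = j then t powi (- w i) else 0)"

(* U(f): generic matrix G of indeterminates G_ij, polynomials in K[G_ij] *)
type_synonym 'a gpoly = "((nat \<times> nat) \<Rightarrow>\<^sub>0 nat) \<Rightarrow>\<^sub>0 'a"

definition Gmat :: "nat \<Rightarrow> nat \<Rightarrow> ('a::{zero,one}) gpoly" where
  "Gmat i j = Poly_Mapping.single (Poly_Mapping.single (i, j) 1) 1"

definition gconst :: "'a::zero \<Rightarrow> 'a gpoly" where
  "gconst c = Poly_Mapping.single 0 c"

definition geval :: "(nat \<Rightarrow> nat \<Rightarrow> 'a::comm_ring_1) \<Rightarrow> 'a gpoly \<Rightarrow> 'a" where
  "geval g P = (\<Sum>E\<in>Poly_Mapping.keys P. Poly_Mapping.lookup P E * (\<Prod>ij\<in>Poly_Mapping.keys E. g (fst ij) (snd ij) ^ Poly_Mapping.lookup E ij))"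

definition U :: "nat \<Rightarrow> nat \<Rightarrow> nat \<Rightarrow> ('a::field) mpoly list \<Rightarrow> (nat \<Rightarrow> nat \<Rightarrow> 'a) set" where
  "U n m r fs = {g \<in> GL n. \<forall>S. let P = wedge n m r
        (map (\<lambda>f. act n Gmat (Poly_Mapping.map gconst f)) fs) S
      in P \<noteq> 0 \<longrightarrow> geval g P \<noteq> 0}"

end

theory Submission
  imports Defs "HOL-Library.FuncSet"
begin

text \<open>For \<open>t \<noteq> 0\<close> the torus element \<open>\<lambda>(t)\<close> multiplies the state \<open>S\<close> by \<open>t\<^sup>-\<^sup>w\<^sup>\<cdot>\<^sup>S\<close>, so the
  coefficient of a state \<open>C\<close> in \<open>h\<cdot>(\<lambda>(t)gf)\<^sub>\<ge>\<^sub>N\<close> is a Laurent polynomial in \<open>t\<close>. As \<open>w\<close> is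
  decreasing and \<open>h\<close> is upper triangular, \<open>h\<close> maps a state \<open>S\<close> to a nonzero multiple of \<open>S\<close> plus
  states of strictly larger weight. If \<open>C\<close> occurs in \<open>(\<lambda>(t)gf)\<^sub>\<ge>\<^sub>N\<close>, the Laurent polynomial therefore
  has a nonzero coefficient at \<open>t\<^sup>-\<^sup>w\<^sup>\<cdot>\<^sup>C\<close> and vanishes for only finitely many \<open>t\<close>. Otherwise
  either every contribution to it is truncated away, or the coefficient of \<open>C\<close> in \<open>gf\<close> is zero;
  since \<open>g \<in> U(f)\<close>, the coefficient of \<open>C\<close> in \<open>Gf\<close> is then the zero polynomial, so the
  untruncated Laurent polynomial vanishes for all \<open>t\<close>, all its coefficients are zero, and so are
  those of its truncation, which keeps or discards whole weight classes.\<close>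

section \<open>Ring homomorphisms and evaluation of polynomials\<close>

locale ring_hom =
  fixes \<psi> :: "'b::comm_ring_1 \<Rightarrow> 'c::comm_ring_1"
  assumes hom_add: "\<psi> (a + b) = \<psi> a + \<psi> b"
    and hom_mult: "\<psi> (a * b) = \<psi> a * \<psi> b"
    and hom_one: "\<psi> 1 = 1"
begin

lemma hom_zero: "\<psi> 0 = 0"
  using hom_add[of 0 0] by simp

lemma hom_uminus: "\<psi> (- a) = - \<psi> a"
  using hom_add[of a "- a"] by (simp add: hom_zero eq_neg_iff_add_eq_0 add.commute)

lemma hom_sum: "\<psi> (sum f A) = (\<Sum>x\<in>A. \<psi> (f x))"
  by (induction A rule: infinite_finite_induct) (auto simp: hom_zero hom_add)

lemma hom_prod: "\<psi> (prod f A) = (\<Prod>x\<in>A. \<psi> (f x))"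
  by (induction A rule: infinite_finite_induct) (auto simp: hom_one hom_mult)

lemma hom_power: "\<psi> (a ^ k) = \<psi> a ^ k"
  by (induction k) (auto simp: hom_one hom_mult)

lemma hom_of_int: "\<psi> (of_int k) = of_int k"
proof (induction k rule: int_induct[where k = 0])
  case (step2 i)
  then show ?case
    by (metis add_uminus_conv_diff diff_add_cancel hom_add hom_one hom_uminus of_int_1 of_int_diff)
qed (simp_all add: hom_zero hom_add hom_one)

lemma hom_mdet: "\<psi> (mdet k M) = mdet k (\<lambda>i j. \<psi> (M i j))"
  unfolding mdet_def by (simp add: hom_sum hom_mult hom_of_int hom_prod)

end

lemma sum_single_lookup_keys: "(\<Sum>A\<in>Poly_Mapping.keys p. Poly_Mapping.single A (Poly_Mapping.lookup p A)) = p"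
  by (rule poly_mapping_eqI) (auto simp: lookup_sum lookup_single when_def in_keys_iff)

lemma mult_eq_sum_single:
  "(p::'k::comm_monoid_add \<Rightarrow>\<^sub>0 'b::comm_ring_1) * q =
    (\<Sum>A\<in>Poly_Mapping.keys p. \<Sum>B\<in>Poly_Mapping.keys q.
        Poly_Mapping.single (A + B) (Poly_Mapping.lookup p A * Poly_Mapping.lookup q B))"
proof -
  have "p * q = (\<Sum>A\<in>Poly_Mapping.keys p. Poly_Mapping.single A (Poly_Mapping.lookup p A)) *
     (\<Sum>B\<in>Poly_Mapping.keys q. Poly_Mapping.single B (Poly_Mapping.lookup q B))"
    by (simp only: sum_single_lookup_keys)
  then show ?thesis
    by (simp add: sum_product mult_single)
qed

text \<open>The action of a matrix, evaluation at a matrix of polynomials in the \<open>G\<^sub>i\<^sub>j\<close> and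
  coefficientwise maps are all instances of \<open>eval_pm\<close>, so each of them is a ring homomorphism.\<close>

definition eval_pm :: "('b::comm_ring_1 \<Rightarrow> 'c::comm_ring_1) \<Rightarrow> ('k::comm_monoid_add \<Rightarrow> 'c) \<Rightarrow> ('k \<Rightarrow>\<^sub>0 'b) \<Rightarrow> 'c" where
  "eval_pm \<phi> e p = (\<Sum>A\<in>Poly_Mapping.keys p. \<phi> (Poly_Mapping.lookup p A) * e A)"

locale eval_pm_hom = ring_hom \<phi> for \<phi> :: "'b::comm_ring_1 \<Rightarrow> 'c::comm_ring_1" +
  fixes e :: "'k::comm_monoid_add \<Rightarrow> 'c"
  assumes e_zero: "e 0 = 1" and e_add: "e (A + B) = e A * e B"
begin

lemma eval_pm_superset:
  "finite K \<Longrightarrow> Poly_Mapping.keys p \<subseteq> K \<Longrightarrow> eval_pm \<phi> e p = (\<Sum>A\<in>K. \<phi> (Poly_Mapping.lookup p A) * e A)"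
  unfolding eval_pm_def by (rule sum.mono_neutral_left) (auto simp: in_keys_iff hom_zero)

lemma eval_pm_single: "eval_pm \<phi> e (Poly_Mapping.single A c) = \<phi> c * e A"
  by (cases "c = 0") (auto simp: eval_pm_def hom_zero)

lemma eval_pm_add: "eval_pm \<phi> e (p + q) = eval_pm \<phi> e p + eval_pm \<phi> e q"
proof -
  let ?K = "Poly_Mapping.keys p \<union> Poly_Mapping.keys q"
  have "eval_pm \<phi> e (p + q) = (\<Sum>A\<in>?K. \<phi> (Poly_Mapping.lookup (p + q) A) * e A)"
    by (rule eval_pm_superset) (auto dest: subsetD[OF keys_add])
  also have "\<dots> = (\<Sum>A\<in>?K. \<phi> (Poly_Mapping.lookup p A) * e A) + (\<Sum>A\<in>?K. \<phi> (Poly_Mapping.lookup q A) * e A)"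
    by (simp add: lookup_add hom_add distrib_right sum.distrib)
  also have "\<dots> = eval_pm \<phi> e p + eval_pm \<phi> e q"
    using eval_pm_superset[of ?K p] eval_pm_superset[of ?K q] by simp
  finally show ?thesis .
qed

lemma eval_pm_sum: "eval_pm \<phi> e (sum f X) = (\<Sum>x\<in>X. eval_pm \<phi> e (f x))"
  by (induction X rule: infinite_finite_induct) (simp_all add: eval_pm_add eval_pm_def[of _ _ 0])

lemma eval_pm_mult: "eval_pm \<phi> e (p * q) = eval_pm \<phi> e p * eval_pm \<phi> e q"
proof -
  have "eval_pm \<phi> e (p * q) = (\<Sum>A\<in>Poly_Mapping.keys p. \<Sum>B\<in>Poly_Mapping.keys q.
        \<phi> (Poly_Mapping.lookup p A) * e A * (\<phi> (Poly_Mapping.lookup q B) * e B))"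
    by (subst mult_eq_sum_single) (simp add: eval_pm_sum eval_pm_single hom_mult e_add mult_ac)
  then show ?thesis
    by (simp add: eval_pm_def sum_product)
qed

lemma ring_hom_eval_pm: "ring_hom (eval_pm \<phi> e)"
proof
  show "eval_pm \<phi> e 1 = 1"
    using eval_pm_single[of 0 1] by (simp add: e_zero hom_one)
qed (simp_all add: eval_pm_add eval_pm_mult)

end

section \<open>Determinants and the Cauchy--Binet formula\<close>

lemma mdet_cong:
  assumes "\<And>i j. i < k \<Longrightarrow> j < k \<Longrightarrow> X i j = Y i j"
  shows "mdet k X = mdet k Y"
  unfolding mdet_def
proof (intro sum.cong refl arg_cong2[where f = "(*)"] prod.cong)
  fix \<sigma> i assume "\<sigma> \<in> {\<sigma>. \<sigma> permutes {..<k}}" and "i \<in> {..<k}"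
  then show "X i (\<sigma> i) = Y i (\<sigma> i)"
    using assms permutes_in_image[of \<sigma> "{..<k}" i] by simp
qed

lemma mdet_scale_cols: "mdet k (\<lambda>i j. X i j * s j) = (\<Prod>j<k. s j) * mdet k X"
  unfolding mdet_def sum_distrib_left
proof (intro sum.cong refl)
  fix \<sigma> assume "\<sigma> \<in> {\<sigma>. \<sigma> permutes {..<k}}"
  then have "(\<Prod>i<k. s (\<sigma> i)) = (\<Prod>j<k. s j)"
    using prod.permute[of \<sigma> "{..<k}" s] by (simp add: comp_def)
  then show "of_int (sign \<sigma>) * (\<Prod>i<k. X i (\<sigma> i) * s (\<sigma> i)) =
      (\<Prod>j<k. s j) * (of_int (sign \<sigma>) * (\<Prod>i<k. X i (\<sigma> i)))"
    by (simp add: prod.distrib mult_ac)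
qed

lemma mdet_permute_rows:
  assumes \<pi>: "\<pi> permutes {..<k}"
  shows "mdet k (\<lambda>i j. X (\<pi> i) j) = of_int (sign \<pi>) * mdet k X"
proof -
  let ?P = "{\<sigma>. \<sigma> permutes {..<k}}"
  have "(\<Prod>i<k. X (\<pi> i) (\<sigma> i)) = (\<Prod>l<k. X l ((\<sigma> \<circ> inv \<pi>) l))" for \<sigma>
    using prod.reindex_bij_betw[OF permutes_imp_bij[OF \<pi>], of "\<lambda>l. X l ((\<sigma> \<circ> inv \<pi>) l)"]
    by (simp add: permutes_inverses[OF \<pi>])
  then have "mdet k (\<lambda>i j. X (\<pi> i) j) = (\<Sum>\<sigma>\<in>?P. of_int (sign \<sigma>) * (\<Prod>l<k. X l ((\<sigma> \<circ> inv \<pi>) l)))"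
    unfolding mdet_def by simp
  also have "\<dots> = (\<Sum>\<tau>\<in>?P. of_int (sign (\<tau> \<circ> \<pi>)) * (\<Prod>l<k. X l (\<tau> l)))"
  proof (rule sum.reindex_bij_witness[where i = "\<lambda>\<tau>. \<tau> \<circ> \<pi>" and j = "\<lambda>\<sigma>. \<sigma> \<circ> inv \<pi>"])
    fix a assume "a \<in> ?P"
    then show "a \<circ> inv \<pi> \<circ> \<pi> = a" "a \<circ> inv \<pi> \<in> ?P"
      "of_int (sign (a \<circ> inv \<pi> \<circ> \<pi>)) * (\<Prod>l<k. X l ((a \<circ> inv \<pi>) l)) =
          of_int (sign a) * (\<Prod>l<k. X l ((a \<circ> inv \<pi>) l))"
      using permutes_inv_o[OF \<pi>] permutes_compose[OF permutes_inv[OF \<pi>], of a]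
      by (simp_all add: comp_assoc)
  next
    fix b assume "b \<in> ?P"
    then show "b \<circ> \<pi> \<circ> inv \<pi> = b" "b \<circ> \<pi> \<in> ?P"
      using permutes_inv_o[OF \<pi>] permutes_compose[OF \<pi>, of b] by (simp_all add: comp_assoc)
  qed
  also have "\<dots> = (\<Sum>\<tau>\<in>?P. of_int (sign \<pi>) * (of_int (sign \<tau>) * (\<Prod>l<k. X l (\<tau> l))))"
  proof (intro sum.cong refl)
    fix \<tau> assume "\<tau> \<in> ?P"
    then have "permutation \<tau>" "permutation \<pi>"
      using \<pi> by (auto simp: permutation_permutes)
    then show "of_int (sign (\<tau> \<circ> \<pi>)) * (\<Prod>l<k. X l (\<tau> l)) =
        of_int (sign \<pi>) * (of_int (sign \<tau>) * (\<Prod>l<k. X l (\<tau> l)))"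
      by (simp add: sign_compose)
  qed
  also have "\<dots> = of_int (sign \<pi>) * mdet k X"
    unfolding mdet_def by (simp add: sum_distrib_left)
  finally show ?thesis .
qed

text \<open>Swapping the two rows negates the determinant and leaves the matrix unchanged; this
  forces it to vanish only because \<open>2 \<noteq> 0\<close>.\<close>

lemma mdet_identical_rows:
  fixes X :: "nat \<Rightarrow> nat \<Rightarrow> 'a::{idom,ring_char_0}"
  assumes "i1 < k" "i2 < k" "i1 \<noteq> i2" "\<And>j. j < k \<Longrightarrow> X i1 j = X i2 j"
  shows "mdet k X = 0"
proof -
  let ?\<pi> = "Transposition.transpose i1 i2"
  have \<pi>: "?\<pi> permutes {..<k}"
    using assms by (intro permutes_swap_id) auto
  have "mdet k X = mdet k (\<lambda>i j. X (?\<pi> i) j)"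
    using assms(4) by (intro mdet_cong) (auto simp: transpose_def)
  also have "\<dots> = - mdet k X"
    using mdet_permute_rows[OF \<pi>, of X] assms by (simp add: sign_swap_id)
  finally have "mdet k X + mdet k X = 0"
    by (simp only: eq_neg_iff_add_eq_0)
  then have "2 * mdet k X = 0"
    by (simp only: mult_2)
  then show ?thesis
    by simp
qed

lemma mdet_eq_prod_diag:
  assumes "\<And>\<sigma>. \<sigma> permutes {..<k} \<Longrightarrow> \<sigma> \<noteq> id \<Longrightarrow> (\<Prod>i<k. X i (\<sigma> i)) = 0"
  shows "mdet k X = (\<Prod>i<k. X i i)"
proof -
  let ?P = "{\<sigma>. \<sigma> permutes {..<k}}"
  have "mdet k X = of_int (sign (id::nat \<Rightarrow> nat)) * (\<Prod>i<k. X i (id i)) +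
      (\<Sum>\<sigma>\<in>?P - {id}. of_int (sign \<sigma>) * (\<Prod>i<k. X i (\<sigma> i)))"
    unfolding mdet_def by (subst sum.remove[of _ id]) (auto simp: permutes_id finite_permutations)
  also have "(\<Sum>\<sigma>\<in>?P - {id}. of_int (sign \<sigma>) * (\<Prod>i<k. X i (\<sigma> i))) = 0"
    using assms by (intro sum.neutral) auto
  finally show ?thesis
    by simp
qed

lemma mdet_upper_tri: "upper_tri n h \<Longrightarrow> mdet (Suc n) h = (\<Prod>i\<le>n. h i i)"
proof -
  assume ut: "upper_tri n h"
  have "(\<Prod>i<Suc n. h i (\<sigma> i)) = 0" if \<sigma>: "\<sigma> permutes {..<Suc n}" and "\<sigma> \<noteq> id" for \<sigma>
  proof -
    have "\<not> (\<forall>i\<in>{..<Suc n}. \<sigma> i \<ge> i)"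
      using permutes_natset_ge[OF \<sigma>] \<open>\<sigma> \<noteq> id\<close> by blast
    then obtain i where i: "i < Suc n" "\<sigma> i < i"
      by (auto simp: not_le)
    then have "h i (\<sigma> i) = 0"
      using ut by (simp add: upper_tri_def)
    then show ?thesis
      using i by (intro prod_zero) auto
  qed
  then show ?thesis
    using mdet_eq_prod_diag[of "Suc n" h] lessThan_Suc_atMost by auto
qed

lemma upper_tri_diag_nonzero:
  fixes h :: "nat \<Rightarrow> nat \<Rightarrow> 'a::field"
  assumes "h \<in> GL n" "upper_tri n h" "k \<le> n"
  shows "h k k \<noteq> 0"
  using assms by (auto simp: GL_def mdet_upper_tri)

lemma
  assumes "finite S"
  shows distinct_rep: "distinct (rep S)" and set_rep: "set (rep S) = S"
    and length_rep: "length (rep S) = card S"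
  using assms by (simp_all add: rep_def)

lemma bij_betw_nth_rep: "finite S \<Longrightarrow> card S = r \<Longrightarrow> bij_betw ((!) (rep S)) {..<r} S"
  by (intro bij_betw_nth) (auto simp: distinct_rep set_rep length_rep)

text \<open>An injective map \<open>{..<r} \<rightarrow> K\<close> is the same as its image \<open>S\<close>, an \<open>r\<close>-subset of \<open>K\<close>,
  together with the permutation \<open>\<pi>\<close> of \<open>{..<r}\<close> that sorts it.\<close>

definition subset_perm_map :: "nat \<Rightarrow> mono set \<times> (nat \<Rightarrow> nat) \<Rightarrow> nat \<Rightarrow> mono" where
  "subset_perm_map r = (\<lambda>(S, \<pi>) i. if i < r then rep S ! \<pi> i else undefined)"

definition sorting_perm :: "nat \<Rightarrow> (nat \<Rightarrow> mono) \<Rightarrow> nat \<Rightarrow> nat" where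
  "sorting_perm r \<phi> i = (if i < r then inv_into {..<r} ((!) (rep (\<phi> ` {..<r}))) (\<phi> i) else i)"

lemma subset_perm_map_apply: "i < r \<Longrightarrow> subset_perm_map r (S, \<pi>) i = rep S ! \<pi> i"
  by (simp add: subset_perm_map_def)

lemma subset_perm_map_props:
  assumes S: "finite S" "card S = r" and \<pi>: "\<pi> permutes {..<r}"
  shows image_subset_perm_map: "subset_perm_map r (S, \<pi>) ` {..<r} = S"
    and sorting_perm_subset_perm_map: "sorting_perm r (subset_perm_map r (S, \<pi>)) = \<pi>"
    and inj_on_subset_perm_map: "inj_on (subset_perm_map r (S, \<pi>)) {..<r}"
proof -
  have bij: "bij_betw ((!) (rep S)) {..<r} S"
    using bij_betw_nth_rep[OF S] .
  have \<pi>_lt: "\<pi> i < r" if "i < r" for i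
    using \<pi> that permutes_in_image by fastforce
  have "subset_perm_map r (S, \<pi>) ` {..<r} = (!) (rep S) ` \<pi> ` {..<r}"
    by (auto simp: subset_perm_map_apply image_iff)
  also have "\<dots> = S"
    using bij by (simp add: permutes_image[OF \<pi>] bij_betw_def)
  finally show img: "subset_perm_map r (S, \<pi>) ` {..<r} = S" .
  show "sorting_perm r (subset_perm_map r (S, \<pi>)) = \<pi>"
  proof
    fix i
    show "sorting_perm r (subset_perm_map r (S, \<pi>)) i = \<pi> i"
      using \<pi>_lt[of i] bij permutes_not_in[OF \<pi>, of i] unfolding sorting_perm_def img
      by (auto simp: subset_perm_map_apply bij_betw_def inv_into_f_f)
  qed
  show "inj_on (subset_perm_map r (S, \<pi>)) {..<r}"
  proof
    fix i j assume "i \<in> {..<r}" "j \<in> {..<r}" "subset_perm_map r (S, \<pi>) i = subset_perm_map r (S, \<pi>) j"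
    then have "\<pi> i = \<pi> j"
      using bij \<pi>_lt by (auto simp: subset_perm_map_apply bij_betw_def inj_on_def)
    then show "i = j"
      using permutes_inj[OF \<pi>] by (auto simp: inj_def)
  qed
qed

lemma sorting_perm_props:
  assumes \<phi>: "\<phi> \<in> extensional {..<r}" "inj_on \<phi> {..<r}"
  shows subset_perm_map_sorting_perm: "subset_perm_map r (\<phi> ` {..<r}, sorting_perm r \<phi>) = \<phi>"
    and sorting_perm_permutes: "sorting_perm r \<phi> permutes {..<r}"
proof -
  let ?S = "\<phi> ` {..<r}"
  have bij: "bij_betw ((!) (rep ?S)) {..<r} ?S"
    using bij_betw_nth_rep[of ?S r] \<phi>(2) by (simp add: card_image)
  have nth_perm: "rep ?S ! sorting_perm r \<phi> i = \<phi> i" and perm_lt: "sorting_perm r \<phi> i < r"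
    if "i < r" for i
    using that bij bij_betw_inv_into_right[OF bij] inv_into_into[of "\<phi> i" "(!) (rep ?S)" "{..<r}"]
    by (auto simp: sorting_perm_def bij_betw_def)
  show "subset_perm_map r (?S, sorting_perm r \<phi>) = \<phi>"
    using \<phi>(1) by (auto simp: subset_perm_map_def nth_perm extensional_def)
  have "inj_on (sorting_perm r \<phi>) {..<r}"
    using \<phi>(2) nth_perm by (metis inj_on_def lessThan_iff)
  then show "sorting_perm r \<phi> permutes {..<r}"
    using perm_lt endo_inj_surj[of "{..<r}" "sorting_perm r \<phi>"]
    by (intro bij_imp_permutes) (auto simp: bij_betw_def sorting_perm_def)
qed

lemma bij_betw_subset_perm_map:
  fixes K :: "mono set"
  assumes K: "finite K"
  shows "bij_betw (subset_perm_map r)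
    (Sigma {S. S \<subseteq> K \<and> card S = r} (\<lambda>_. {\<pi>. \<pi> permutes {..<r}}))
    {\<phi> \<in> PiE {..<r} (\<lambda>_. K). inj_on \<phi> {..<r}}"
    (is "bij_betw ?\<Psi> ?SP ?I")
proof (rule bij_betw_byWitness[where f' = "\<lambda>\<phi>. (\<phi> ` {..<r}, sorting_perm r \<phi>)"])
  have SP: "finite S" "card S = r" "\<pi> permutes {..<r}" "S \<subseteq> K" if "(S, \<pi>) \<in> ?SP" for S \<pi>
  proof -
    show "card S = r" "\<pi> permutes {..<r}" "S \<subseteq> K"
      using that by simp_all
    then show "finite S"
      using K by (blast intro: finite_subset)
  qed
  show "\<forall>x\<in>?SP. (?\<Psi> x ` {..<r}, sorting_perm r (?\<Psi> x)) = x"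
  proof
    fix x assume "x \<in> ?SP"
    moreover obtain S \<pi> where x: "x = (S, \<pi>)"
      by (cases x)
    ultimately have "finite S" "card S = r" "\<pi> permutes {..<r}"
      using SP by blast+
    then show "(?\<Psi> x ` {..<r}, sorting_perm r (?\<Psi> x)) = x"
      by (simp add: x image_subset_perm_map sorting_perm_subset_perm_map)
  qed
  have mem: "?\<Psi> (S, \<pi>) \<in> ?I" if "(S, \<pi>) \<in> ?SP" for S \<pi>
  proof -
    have "?\<Psi> (S, \<pi>) i \<in> K" if "i < r" for i
      using image_subset_perm_map[OF SP(1-3)[OF \<open>(S, \<pi>) \<in> ?SP\<close>]] SP(4)[OF \<open>(S, \<pi>) \<in> ?SP\<close>] that
      by blast
    moreover have "?\<Psi> (S, \<pi>) \<in> extensional {..<r}"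
      by (simp add: subset_perm_map_def extensional_def)
    ultimately show ?thesis
      using inj_on_subset_perm_map[OF SP(1-3)[OF that]] by (simp add: PiE_iff)
  qed
  show "?\<Psi> ` ?SP \<subseteq> ?I"
  proof
    fix y assume "y \<in> ?\<Psi> ` ?SP"
    then obtain x where "x \<in> ?SP" "y = ?\<Psi> x"
      by (rule imageE)
    then show "y \<in> ?I"
      using mem by (cases x) simp
  qed
  show "\<forall>\<phi>\<in>?I. ?\<Psi> (\<phi> ` {..<r}, sorting_perm r \<phi>) = \<phi>"
    by (auto simp: PiE_iff subset_perm_map_sorting_perm)
  show "(\<lambda>\<phi>. (\<phi> ` {..<r}, sorting_perm r \<phi>)) ` ?I \<subseteq> ?SP"
    by (auto simp: PiE_iff card_image sorting_perm_permutes)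
qed

lemma mdet_mult_expand:
  fixes a :: "nat \<Rightarrow> 'k \<Rightarrow> 'a::{idom,ring_char_0}" and b :: "'k \<Rightarrow> nat \<Rightarrow> 'a"
  assumes K: "finite K"
  shows "mdet r (\<lambda>i j. \<Sum>k\<in>K. a i k * b k j) =
    (\<Sum>\<phi>\<in>{\<phi> \<in> PiE {..<r} (\<lambda>_. K). inj_on \<phi> {..<r}}. (\<Prod>i<r. a i (\<phi> i)) * mdet r (\<lambda>i j. b (\<phi> i) j))"
proof -
  let ?P = "{\<sigma>. \<sigma> permutes {..<r}}"
  let ?F = "PiE {..<r} (\<lambda>_. K)"
  let ?G = "\<lambda>\<phi>. (\<Prod>i<r. a i (\<phi> i)) * mdet r (\<lambda>i j. b (\<phi> i) j)"
  have "mdet r (\<lambda>i j. \<Sum>k\<in>K. a i k * b k j) =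
      (\<Sum>\<sigma>\<in>?P. \<Sum>\<phi>\<in>?F. (\<Prod>i<r. a i (\<phi> i)) * (of_int (sign \<sigma>) * (\<Prod>i<r. b (\<phi> i) (\<sigma> i))))"
    unfolding mdet_def using K
    by (simp add: prod_sum_PiE sum_distrib_left prod.distrib mult.left_commute)
  also have "\<dots> = (\<Sum>\<phi>\<in>?F. ?G \<phi>)"
    unfolding mdet_def by (subst sum.swap) (simp add: sum_distrib_left)
  also have "\<dots> = (\<Sum>\<phi>\<in>{\<phi> \<in> ?F. inj_on \<phi> {..<r}}. ?G \<phi>)"
  proof (rule sum.mono_neutral_right)
    show "\<forall>\<phi>\<in>?F - {\<phi> \<in> ?F. inj_on \<phi> {..<r}}. ?G \<phi> = 0"
    proof
      fix \<phi> assume "\<phi> \<in> ?F - {\<phi> \<in> ?F. inj_on \<phi> {..<r}}"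
      then obtain i1 i2 where "i1 < r" "i2 < r" "i1 \<noteq> i2" "\<phi> i1 = \<phi> i2"
        unfolding inj_on_def by auto
      then show "?G \<phi> = 0"
        by (simp add: mdet_identical_rows[of i1 r i2])
    qed
  qed (use K in \<open>auto simp: finite_PiE\<close>)
  finally show ?thesis .
qed

theorem cauchy_binet:
  fixes a :: "nat \<Rightarrow> mono \<Rightarrow> 'a::{idom,ring_char_0}" and b :: "mono \<Rightarrow> nat \<Rightarrow> 'a"
  assumes K: "finite K"
  shows "mdet r (\<lambda>i j. \<Sum>k\<in>K. a i k * b k j) =
    (\<Sum>S | S \<subseteq> K \<and> card S = r. mdet r (\<lambda>i j. a i (rep S ! j)) * mdet r (\<lambda>i j. b (rep S ! i) j))"
proof -
  let ?G = "\<lambda>\<phi>. (\<Prod>i<r. a i (\<phi> i)) * mdet r (\<lambda>i j. b (\<phi> i) j)"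
  have perm_term: "?G (subset_perm_map r (S, \<pi>)) =
      of_int (sign \<pi>) * (\<Prod>i<r. a i (rep S ! \<pi> i)) * mdet r (\<lambda>i j. b (rep S ! i) j)"
    if \<pi>: "\<pi> permutes {..<r}" for S \<pi>
  proof -
    have "mdet r (\<lambda>i j. b (subset_perm_map r (S, \<pi>) i) j) = mdet r (\<lambda>i j. b (rep S ! \<pi> i) j)"
      by (rule mdet_cong) (simp add: subset_perm_map_def)
    then show ?thesis
      by (simp add: mdet_permute_rows[OF \<pi>, of "\<lambda>i j. b (rep S ! i) j"] subset_perm_map_def mult_ac)
  qed
  have "mdet r (\<lambda>i j. \<Sum>k\<in>K. a i k * b k j) =
      (\<Sum>x\<in>Sigma {S. S \<subseteq> K \<and> card S = r} (\<lambda>_. {\<pi>. \<pi> permutes {..<r}}). ?G (subset_perm_map r x))"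
    unfolding mdet_mult_expand[OF K] by (rule sum.reindex_bij_betw[OF bij_betw_subset_perm_map[OF K], symmetric])
  also have "\<dots> = (\<Sum>S | S \<subseteq> K \<and> card S = r. \<Sum>\<pi> | \<pi> permutes {..<r}. ?G (subset_perm_map r (S, \<pi>)))"
    using K by (subst sum.Sigma) (auto simp: finite_permutations intro: finite_subset[of _ "Pow K"])
  also have "\<dots> = (\<Sum>S | S \<subseteq> K \<and> card S = r.
      (\<Sum>\<pi> | \<pi> permutes {..<r}. of_int (sign \<pi>) * (\<Prod>i<r. a i (rep S ! \<pi> i))) * mdet r (\<lambda>i j. b (rep S ! i) j))"
    unfolding sum_distrib_right by (intro sum.cong refl) (simp add: perm_term)
  also have "\<dots> = (\<Sum>S | S \<subseteq> K \<and> card S = r. mdet r (\<lambda>i j. a i (rep S ! j)) * mdet r (\<lambda>i j. b (rep S ! i) j))"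
    by (simp add: mdet_def)
  finally show ?thesis .
qed

section \<open>The action of matrices on forms\<close>

definition lin_form :: "nat \<Rightarrow> (nat \<Rightarrow> nat \<Rightarrow> 'b::comm_ring_1) \<Rightarrow> nat \<Rightarrow> 'b mpoly" where
  "lin_form n M i = (\<Sum>j\<le>n. const (M j i) * var j)"

definition mono_image :: "nat \<Rightarrow> (nat \<Rightarrow> nat \<Rightarrow> 'b::comm_ring_1) \<Rightarrow> mono \<Rightarrow> 'b mpoly" where
  "mono_image n M A = (\<Prod>i\<le>n. lin_form n M i ^ Poly_Mapping.lookup A i)"

lemma act_eq_eval_pm: "act n M p = eval_pm const (mono_image n M) p"
  unfolding act_def eval_pm_def mono_image_def lin_form_def ..

lemma ring_hom_const: "ring_hom (const :: 'b::comm_ring_1 \<Rightarrow> 'b mpoly)"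
  by unfold_locales (auto simp: const_def single_add mult_single)

lemma eval_pm_hom_mono_image: "eval_pm_hom const (mono_image n (M :: nat \<Rightarrow> nat \<Rightarrow> 'b::comm_ring_1))"
proof -
  interpret ring_hom "const :: 'b \<Rightarrow> 'b mpoly"
    by (rule ring_hom_const)
  show ?thesis
    by unfold_locales (auto simp: mono_image_def lookup_add power_add prod.distrib)
qed

lemma ring_hom_act: "ring_hom (act n (M :: nat \<Rightarrow> nat \<Rightarrow> 'b::comm_ring_1))"
proof -
  interpret eval_pm_hom const "mono_image n M"
    by (rule eval_pm_hom_mono_image)
  show ?thesis
    unfolding act_eq_eval_pm[abs_def] by (rule ring_hom_eval_pm)
qed

lemma act_single: "act n M (Poly_Mapping.single A c) = const c * mono_image n M A"
proof -
  interpret eval_pm_hom const "mono_image n M"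
    by (rule eval_pm_hom_mono_image)
  show ?thesis
    unfolding act_eq_eval_pm by (rule eval_pm_single)
qed

lemma act_const: "act n M (const c) = const c"
  by (simp add: const_def act_single mono_image_def)

lemma act_monom: "act n M (monom B) = mono_image n M B"
  by (simp add: monom_def act_single const_def)

lemma act_var: "j \<le> n \<Longrightarrow> act n M (var j) = lin_form n M j"
  by (simp add: var_def act_monom mono_image_def lookup_single when_def if_distrib prod.delta
      cong: if_cong)

lemma act_lin_form:
  fixes M :: "nat \<Rightarrow> nat \<Rightarrow> 'b::comm_ring_1"
  shows "act n h (lin_form n M i) = lin_form n (mmul n h M) i"
proof -
  interpret ring_hom "act n h"
    by (rule ring_hom_act)
  interpret c: ring_hom "const :: 'b \<Rightarrow> 'b mpoly"
    by (rule ring_hom_const)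
  have "act n h (lin_form n M i) = (\<Sum>j\<le>n. \<Sum>k\<le>n. const (h k j * M j i) * var k)"
    unfolding lin_form_def
    by (simp add: hom_sum hom_mult act_const act_var lin_form_def sum_distrib_left c.hom_mult mult_ac)
  also have "\<dots> = lin_form n (mmul n h M) i"
    unfolding lin_form_def mmul_def by (subst sum.swap) (simp add: c.hom_sum sum_distrib_right)
  finally show ?thesis .
qed

lemma act_act: "act n h (act n M f) = act n (mmul n h M) f"
proof -
  interpret ring_hom "act n h"
    by (rule ring_hom_act)
  show ?thesis
    unfolding act_def[of n M] act_def[of n "mmul n h M"]
    by (simp add: hom_sum hom_mult hom_prod hom_power act_const act_lin_form[unfolded lin_form_def])
qed

lemma lookup_const_mult: "Poly_Mapping.lookup (const c * p) C = c * Poly_Mapping.lookup p C"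
  by (simp add: const_def mult_map_scale_conv_mult[symmetric] Poly_Mapping.map.rep_eq when_def)

lemma lookup_act:
  assumes "finite K" "Poly_Mapping.keys q \<subseteq> K"
  shows "Poly_Mapping.lookup (act n h q) C =
    (\<Sum>B\<in>K. Poly_Mapping.lookup q B * Poly_Mapping.lookup (act n h (monom B)) C)"
proof -
  interpret eval_pm_hom const "mono_image n h"
    by (rule eval_pm_hom_mono_image)
  have "act n h q = (\<Sum>B\<in>K. const (Poly_Mapping.lookup q B) * mono_image n h B)"
    unfolding act_eq_eval_pm by (rule eval_pm_superset[OF assms])
  then show ?thesis
    by (simp add: lookup_sum lookup_const_mult act_monom)
qed

lemma monos_deg_add: "A \<in> monos_deg n d1 \<Longrightarrow> B \<in> monos_deg n d2 \<Longrightarrow> A + B \<in> monos_deg n (d1 + d2)"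
  unfolding monos_deg_def using keys_add[of A B] by (auto simp: lookup_add sum.distrib)

lemma forms_mult: "p \<in> forms n d1 \<Longrightarrow> q \<in> forms n d2 \<Longrightarrow> (p::'b::comm_ring_1 mpoly) * q \<in> forms n (d1 + d2)"
  unfolding forms_def using keys_mult[of p q] monos_deg_add by blast

lemma forms_sum: "(\<And>x. x \<in> X \<Longrightarrow> f x \<in> forms n d) \<Longrightarrow> (sum f X :: 'b::comm_ring_1 mpoly) \<in> forms n d"
  by (induction X rule: infinite_finite_induct) (auto simp: forms_def dest: subsetD[OF keys_add])

lemma const_in_forms: "const c \<in> forms n 0"
  by (simp add: forms_def const_def monos_deg_def)

lemma one_in_forms: "(1::'b::comm_ring_1 mpoly) \<in> forms n 0"
  by (simp add: forms_def monos_deg_def)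

lemma forms_prod:
  "finite I \<Longrightarrow> (\<And>i. i \<in> I \<Longrightarrow> f i \<in> forms n (d i)) \<Longrightarrow> (\<Prod>i\<in>I. f i :: 'b::comm_ring_1 mpoly) \<in> forms n (\<Sum>i\<in>I. d i)"
  by (induction I rule: finite_induct) (auto simp: one_in_forms intro: forms_mult)

lemma forms_power: "p \<in> forms n d \<Longrightarrow> (p::'b::comm_ring_1 mpoly) ^ k \<in> forms n (k * d)"
  using forms_prod[of "{..<k}" "\<lambda>_. p" n "\<lambda>_. d"] by simp

lemma var_in_forms: "j \<le> n \<Longrightarrow> (var j :: 'b::comm_ring_1 mpoly) \<in> forms n 1"
  by (simp add: forms_def var_def monom_def monos_deg_def lookup_single when_def)

lemma lin_form_in_forms: "lin_form n M i \<in> forms n 1"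
  unfolding lin_form_def
  using forms_mult[OF const_in_forms var_in_forms] by (intro forms_sum) simp

lemma mono_image_in_forms:
  assumes "A \<in> monos_deg n d"
  shows "mono_image n M A \<in> forms n d"
proof -
  have "mono_image n M A \<in> forms n (\<Sum>i\<le>n. Poly_Mapping.lookup A i * 1)"
    unfolding mono_image_def by (intro forms_prod forms_power lin_form_in_forms) simp
  then show ?thesis
    using assms by (simp add: monos_deg_def)
qed

lemma act_in_forms:
  assumes "f \<in> forms n d"
  shows "act n M f \<in> forms n d"
proof -
  have "const (Poly_Mapping.lookup f A) * mono_image n M A \<in> forms n d"
    if "A \<in> Poly_Mapping.keys f" for A
    using forms_mult[OF const_in_forms mono_image_in_forms] assms that by (fastforce simp: forms_def)
  then show ?thesis
    unfolding act_def[of n M, folded lin_form_def, folded mono_image_def] by (intro forms_sum)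
qed

definition gmono_eval :: "(nat \<Rightarrow> nat \<Rightarrow> 'a::comm_ring_1) \<Rightarrow> ((nat \<times> nat) \<Rightarrow>\<^sub>0 nat) \<Rightarrow> 'a" where
  "gmono_eval g E = (\<Prod>ij\<in>Poly_Mapping.keys E. g (fst ij) (snd ij) ^ Poly_Mapping.lookup E ij)"

lemma geval_eq_eval_pm: "geval g P = eval_pm id (gmono_eval g) P"
  unfolding geval_def eval_pm_def gmono_eval_def by simp

lemma gmono_eval_superset:
  "finite K \<Longrightarrow> Poly_Mapping.keys E \<subseteq> K \<Longrightarrow>
    gmono_eval g E = (\<Prod>ij\<in>K. g (fst ij) (snd ij) ^ Poly_Mapping.lookup E ij)"
  unfolding gmono_eval_def by (rule prod.mono_neutral_left) (auto simp: in_keys_iff)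

lemma eval_pm_hom_geval: "eval_pm_hom id (gmono_eval g)"
proof
  fix A B :: "(nat \<times> nat) \<Rightarrow>\<^sub>0 nat"
  let ?K = "Poly_Mapping.keys A \<union> Poly_Mapping.keys B"
  have "gmono_eval g (A + B) = (\<Prod>ij\<in>?K. g (fst ij) (snd ij) ^ Poly_Mapping.lookup (A + B) ij)"
    using keys_add[of A B] by (intro gmono_eval_superset) auto
  also have "\<dots> = (\<Prod>ij\<in>?K. g (fst ij) (snd ij) ^ Poly_Mapping.lookup A ij) *
        (\<Prod>ij\<in>?K. g (fst ij) (snd ij) ^ Poly_Mapping.lookup B ij)"
    by (simp add: lookup_add power_add prod.distrib)
  also have "\<dots> = gmono_eval g A * gmono_eval g B"
    using gmono_eval_superset[of ?K A g] gmono_eval_superset[of ?K B g] by simp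
  finally show "gmono_eval g (A + B) = gmono_eval g A * gmono_eval g B" .
qed (simp_all add: gmono_eval_def)

lemma ring_hom_geval: "ring_hom (geval g)"
proof -
  interpret eval_pm_hom id "gmono_eval g"
    by (rule eval_pm_hom_geval)
  show ?thesis
    unfolding geval_eq_eval_pm[abs_def] by (rule ring_hom_eval_pm)
qed

lemma geval_single: "geval g (Poly_Mapping.single E c) = c * gmono_eval g E"
proof -
  interpret eval_pm_hom id "gmono_eval g"
    by (rule eval_pm_hom_geval)
  show ?thesis
    unfolding geval_eq_eval_pm by (simp add: eval_pm_single)
qed

lemma geval_Gmat: "geval g (Gmat i j) = g i j"
  by (simp add: Gmat_def geval_single gmono_eval_def)

lemma geval_gconst: "geval g (gconst c) = c"
  by (simp add: gconst_def geval_single gmono_eval_def)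

lemma lookup_map_ring_hom:
  "ring_hom \<psi> \<Longrightarrow> Poly_Mapping.lookup (Poly_Mapping.map \<psi> p) k = \<psi> (Poly_Mapping.lookup p k)"
  by (simp add: Poly_Mapping.map.rep_eq when_def ring_hom.hom_zero)

lemma map_eq_eval_pm: "ring_hom \<psi> \<Longrightarrow> Poly_Mapping.map \<psi> p = eval_pm (\<lambda>c. const (\<psi> c)) monom p"
  by (rule poly_mapping_eqI)
    (auto simp: eval_pm_def const_def monom_def mult_single lookup_map_ring_hom lookup_sum
      lookup_single when_def in_keys_iff ring_hom.hom_zero)

lemma ring_hom_map:
  fixes \<psi> :: "'b::comm_ring_1 \<Rightarrow> 'c::comm_ring_1"
  assumes "ring_hom \<psi>"
  shows "ring_hom (Poly_Mapping.map \<psi> :: 'b mpoly \<Rightarrow> 'c mpoly)"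
proof -
  interpret p: ring_hom \<psi>
    by fact
  interpret e: eval_pm_hom "\<lambda>c. const (\<psi> c)" "monom :: mono \<Rightarrow> 'c mpoly"
    by unfold_locales (auto simp: p.hom_add p.hom_mult p.hom_one const_def single_add monom_def mult_single)
  show ?thesis
    using e.ring_hom_eval_pm unfolding map_eq_eval_pm[OF assms, abs_def] .
qed

lemma keys_map_gconst: "Poly_Mapping.keys (Poly_Mapping.map gconst f) = Poly_Mapping.keys f"
  by (auto simp: in_keys_iff Poly_Mapping.map.rep_eq when_def gconst_def)
    (metis lookup_single_eq lookup_zero)

lemma geval_act_Gmat:
  fixes f :: "'a::comm_ring_1 mpoly"
  shows "Poly_Mapping.map (geval M) (act n Gmat (Poly_Mapping.map gconst f)) = act n M f"
proof -
  have g: "ring_hom (geval M)"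
    by (rule ring_hom_geval)
  interpret ring_hom "Poly_Mapping.map (geval M) :: 'a gpoly mpoly \<Rightarrow> 'a mpoly"
    by (rule ring_hom_map[OF g])
  have "Poly_Mapping.lookup (Poly_Mapping.map gconst f) A = gconst (Poly_Mapping.lookup f A)" for A
    by (simp add: Poly_Mapping.map.rep_eq when_def gconst_def)
  then show ?thesis
    unfolding act_def keys_map_gconst
    by (simp add: hom_sum hom_mult hom_prod hom_power const_def var_def monom_def geval_gconst
        geval_Gmat ring_hom.hom_zero[OF g] ring_hom.hom_one[OF g])
qed

lemma geval_wedge_generic:
  fixes fs :: "'a::comm_ring_1 mpoly list"
  assumes "length fs = r"
  shows "geval M (wedge n m r (map (\<lambda>f. act n Gmat (Poly_Mapping.map gconst f)) fs) S) =
    wedge n m r (map (act n M) fs) S"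
  using assms
  by (auto simp: wedge_def ring_hom.hom_zero[OF ring_hom_geval] ring_hom.hom_mdet[OF ring_hom_geval]
      lookup_map_ring_hom[OF ring_hom_geval, symmetric] geval_act_Gmat intro!: mdet_cong)

section \<open>States and the one-parameter subgroup \<open>\<lambda>(t)\<close>\<close>

lemma finite_monos_deg: "finite (monos_deg n m)"
proof -
  let ?g = "\<lambda>A. restrict (Poly_Mapping.lookup A) {..n}"
  have "Poly_Mapping.lookup A i \<le> m" if "A \<in> monos_deg n m" "i \<le> n" for A i
    using that member_le_sum[of i "{..n}" "Poly_Mapping.lookup A"] by (auto simp: monos_deg_def)
  then have "?g ` monos_deg n m \<subseteq> PiE {..n} (\<lambda>_. {..m})"
    by (auto simp: PiE_def)
  then have "finite (?g ` monos_deg n m)"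
    by (rule finite_subset) (simp add: finite_PiE)
  moreover have "inj_on ?g (monos_deg n m)"
  proof
    fix A B assume A: "A \<in> monos_deg n m" and B: "B \<in> monos_deg n m" and eq: "?g A = ?g B"
    show "A = B"
    proof (rule poly_mapping_eqI)
      fix k
      show "Poly_Mapping.lookup A k = Poly_Mapping.lookup B k"
      proof (cases "k \<le> n")
        case False
        then have "k \<notin> Poly_Mapping.keys A" "k \<notin> Poly_Mapping.keys B"
          using A B by (auto simp: monos_deg_def)
        then show ?thesis
          by (simp add: in_keys_iff)
      qed (use fun_cong[OF eq, of k] in simp)
    qed
  qed
  ultimately show ?thesis
    by (rule finite_imageD)
qed

lemma finite_states: "finite (states n m r)"
  unfolding states_def using finite_monos_deg
  by (auto intro: finite_subset[of _ "Pow (monos_deg n m)"])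

lemma statesD:
  assumes "S \<in> states n m r"
  shows "finite S" "card S = r" "S \<subseteq> monos_deg n m" "distinct (rep S)" "set (rep S) = S"
    "length (rep S) = r"
proof -
  show fin: "finite S"
    using assms finite_monos_deg[of n m] by (auto simp: states_def intro: finite_subset)
  show "card S = r" "S \<subseteq> monos_deg n m" "distinct (rep S)" "set (rep S) = S" "length (rep S) = r"
    using assms fin by (auto simp: states_def distinct_rep set_rep length_rep)
qed

lemma sum_rep: "finite S \<Longrightarrow> card S = r \<Longrightarrow> (\<Sum>j<r. f (rep S ! j)) = (\<Sum>B\<in>S. f B)"
  by (rule sum.reindex_bij_betw[OF bij_betw_nth_rep])

lemma wedge_eq_mdet:
  "S \<in> states n m r \<Longrightarrow> length fs = r \<Longrightarrow>
    wedge n m r (map F fs) S = mdet r (\<lambda>i j. Poly_Mapping.lookup (F (fs ! i)) (rep S ! j))"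
  unfolding wedge_def by (auto intro: mdet_cong)

lemma lin_form_lam:
  assumes "i \<le> n"
  shows "lin_form n (lam w t) i = const (t powi (- w i)) * var i"
proof -
  have "lin_form n (lam w t) i = (\<Sum>j\<le>n. if j = i then const (t powi (- w i)) * var i else 0)"
    unfolding lin_form_def lam_def by (rule sum.cong) (simp_all add: const_def)
  then show ?thesis
    using assms by simp
qed

lemma var_power: "(var i :: 'b::comm_ring_1 mpoly) ^ k = monom (Poly_Mapping.single i k)"
  by (induction k) (simp_all add: var_def monom_def mult_single single_add[symmetric])

lemma prod_monom: "finite I \<Longrightarrow> (\<Prod>i\<in>I. monom (f i) :: 'b::comm_ring_1 mpoly) = monom (\<Sum>i\<in>I. f i)"
  by (induction I rule: finite_induct) (simp_all add: monom_def mult_single)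

lemma sum_single_lookup:
  fixes A :: mono
  assumes "Poly_Mapping.keys A \<subseteq> {..n}"
  shows "(\<Sum>i\<le>n. Poly_Mapping.single i (Poly_Mapping.lookup A i)) = A"
  using assms by (intro poly_mapping_eqI) (auto simp: lookup_sum lookup_single when_def in_keys_iff)

lemma power_int_sum:
  fixes t :: "'a::field"
  assumes "t \<noteq> 0" "finite I"
  shows "(\<Prod>i\<in>I. t powi e i) = t powi (\<Sum>i\<in>I. e i)"
  using assms(2) by (induction I rule: finite_induct) (simp_all add: power_int_add assms(1))

lemma mono_image_lam:
  fixes t :: "'a::field"
  assumes t: "t \<noteq> 0" and A: "Poly_Mapping.keys A \<subseteq> {..n}"
  shows "mono_image n (lam w t) A = const (t powi (- wdot n w A)) * monom A"
proof -
  interpret c: ring_hom "const :: 'a \<Rightarrow> 'a mpoly"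
    by (rule ring_hom_const)
  have "mono_image n (lam w t) A = (\<Prod>i\<le>n. (const (t powi (- w i)) * var i) ^ Poly_Mapping.lookup A i)"
    unfolding mono_image_def by (simp add: lin_form_lam)
  also have "\<dots> = const (\<Prod>i\<le>n. (t powi (- w i)) ^ Poly_Mapping.lookup A i) *
      (\<Prod>i\<le>n. monom (Poly_Mapping.single i (Poly_Mapping.lookup A i)))"
    by (simp add: power_mult_distrib prod.distrib c.hom_prod c.hom_power var_power)
  also have "(\<Prod>i\<le>n. (t powi (- w i)) ^ Poly_Mapping.lookup A i) = t powi (- wdot n w A)"
    using t by (simp add: power_int_power' power_int_sum wdot_def sum_negf)
  finally show ?thesis
    by (simp add: prod_monom sum_single_lookup[OF A])
qed

lemma lookup_monom: "Poly_Mapping.lookup (monom A :: 'b::comm_ring_1 mpoly) B = (if A = B then 1 else 0)"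
  by (simp add: monom_def lookup_single when_def)

lemma lookup_act_lam:
  fixes t :: "'a::field"
  assumes t: "t \<noteq> 0" and q: "q \<in> forms n d"
  shows "Poly_Mapping.lookup (act n (lam w t) q) B = t powi (- wdot n w B) * Poly_Mapping.lookup q B"
proof -
  have keys: "Poly_Mapping.keys A \<subseteq> {..n}" if "A \<in> Poly_Mapping.keys q" for A
    using q that by (auto simp: forms_def monos_deg_def)
  have "Poly_Mapping.lookup (act n (lam w t) q) B =
      (\<Sum>A\<in>Poly_Mapping.keys q. Poly_Mapping.lookup q A * Poly_Mapping.lookup (act n (lam w t) (monom A)) B)"
    by (rule lookup_act) auto
  also have "\<dots> = (\<Sum>A\<in>Poly_Mapping.keys q. if A = B then Poly_Mapping.lookup q A * t powi (- wdot n w A) else 0)"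
    using t keys by (intro sum.cong refl) (simp add: act_monom mono_image_lam lookup_const_mult lookup_monom)
  finally show ?thesis
    by (auto simp: in_keys_iff)
qed

lemma wedge_lam:
  fixes t :: "'a::field" and fs :: "'a mpoly list"
  assumes t: "t \<noteq> 0" and len: "length fs = r" and forms: "\<forall>f\<in>set fs. f \<in> forms n m"
  shows "wedge n m r (map (act n (mmul n (lam w t) g)) fs) S =
    t powi (- sweight n w S) * wedge n m r (map (act n g) fs) S"
proof (cases "S \<in> states n m r")
  case S: True
  have "wedge n m r (map (act n (mmul n (lam w t) g)) fs) S =
      mdet r (\<lambda>i j. Poly_Mapping.lookup (act n g (fs ! i)) (rep S ! j) * t powi (- wdot n w (rep S ! j)))"
  proof (unfold wedge_eq_mdet[OF S len], rule mdet_cong)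
    fix i j assume "i < r" "j < r"
    then have "act n g (fs ! i) \<in> forms n m"
      using forms len by (simp add: act_in_forms)
    then show "Poly_Mapping.lookup (act n (mmul n (lam w t) g) (fs ! i)) (rep S ! j) =
        Poly_Mapping.lookup (act n g (fs ! i)) (rep S ! j) * t powi (- wdot n w (rep S ! j))"
      by (simp add: act_act[symmetric] lookup_act_lam[OF t] mult.commute)
  qed
  also have "\<dots> = t powi (- sweight n w S) * wedge n m r (map (act n g) fs) S"
    using t statesD[OF S]
    by (simp add: mdet_scale_cols wedge_eq_mdet[OF S len] power_int_sum sum_rep sweight_def sum_negf)
  finally show ?thesis .
qed (simp add: wedge_def)

section \<open>Upper triangular matrices and lowest-weight terms\<close>

definition lowest_term :: "nat \<Rightarrow> (nat \<Rightarrow> int) \<Rightarrow> 'b::comm_ring_1 mpoly \<Rightarrow> mono \<Rightarrow> 'b \<Rightarrow> bool" where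
  "lowest_term n w p A c \<longleftrightarrow> Poly_Mapping.lookup p A = c \<and>
     (\<forall>C\<in>Poly_Mapping.keys p. wdot n w A \<le> wdot n w C \<and> (wdot n w C = wdot n w A \<longrightarrow> C = A))"

lemma wdot_add: "wdot n w (A + B) = wdot n w A + wdot n w B"
  by (simp add: wdot_def lookup_add distrib_left sum.distrib)

lemma lowest_term_mult:
  assumes p: "lowest_term n w p A a" and q: "lowest_term n w q B b"
  shows "lowest_term n w (p * q) (A + B) (a * b)"
proof -
  let ?wd = "wdot n w"
  have le: "?wd A \<le> ?wd C" "?wd B \<le> ?wd D"
    if "C \<in> Poly_Mapping.keys p" "D \<in> Poly_Mapping.keys q" for C D
    using p q that by (auto simp: lowest_term_def)
  have eq: "C = A \<and> D = B"
    if "C \<in> Poly_Mapping.keys p" "D \<in> Poly_Mapping.keys q" "?wd (C + D) = ?wd (A + B)" for C D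
  proof -
    have "?wd C = ?wd A" "?wd D = ?wd B"
      using le[OF that(1,2)] that(3) unfolding wdot_add by linarith+
    then show ?thesis
      using that(1,2) p q by (auto simp: lowest_term_def)
  qed
  have "Poly_Mapping.lookup (p * q) (A + B) =
      (\<Sum>C\<in>Poly_Mapping.keys p. \<Sum>D\<in>Poly_Mapping.keys q.
        if C = A \<and> D = B then Poly_Mapping.lookup p C * Poly_Mapping.lookup q D else 0)"
    unfolding mult_eq_sum_single[of p q] lookup_sum
    using eq by (intro sum.cong refl) (auto simp: lookup_single when_def)
  also have "\<dots> = (\<Sum>C\<in>Poly_Mapping.keys p. if C = A then (\<Sum>D\<in>Poly_Mapping.keys q.
        if D = B then Poly_Mapping.lookup p A * Poly_Mapping.lookup q B else 0) else 0)"
    by (intro sum.cong refl) auto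
  also have "\<dots> = a * b"
    using p q by (auto simp: lowest_term_def in_keys_iff)
  finally have "Poly_Mapping.lookup (p * q) (A + B) = a * b" .
  moreover have "?wd (A + B) \<le> ?wd E \<and> (?wd E = ?wd (A + B) \<longrightarrow> E = A + B)"
    if E: "E \<in> Poly_Mapping.keys (p * q)" for E
  proof -
    obtain C D where "C \<in> Poly_Mapping.keys p" "D \<in> Poly_Mapping.keys q" "E = C + D"
      using E keys_mult[of p q] by blast
    then show ?thesis
      using le eq by (fastforce simp: wdot_add)
  qed
  ultimately show ?thesis
    by (simp add: lowest_term_def)
qed

lemma lowest_term_one: "lowest_term n w 1 0 1"
  by (simp add: lowest_term_def)

lemma lowest_term_prod:
  "finite I \<Longrightarrow> (\<And>i. i \<in> I \<Longrightarrow> lowest_term n w (f i) (A i) (a i)) \<Longrightarrow>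
    lowest_term n w (\<Prod>i\<in>I. f i) (\<Sum>i\<in>I. A i) (\<Prod>i\<in>I. a i)"
  by (induction I rule: finite_induct) (auto simp: lowest_term_one intro: lowest_term_mult)

lemma lowest_term_power:
  assumes "lowest_term n w p (Poly_Mapping.single i 1) a"
  shows "lowest_term n w (p ^ k) (Poly_Mapping.single i k) (a ^ k)"
proof (induction k)
  case (Suc k)
  have "Poly_Mapping.single i (Suc k) = Poly_Mapping.single i 1 + Poly_Mapping.single i k"
    by (simp add: single_add[symmetric])
  then show ?case
    using lowest_term_mult[OF assms Suc] by simp
qed (simp add: lowest_term_one)

lemma wdot_single: "j \<le> n \<Longrightarrow> wdot n w (Poly_Mapping.single j 1) = w j"
  by (simp add: wdot_def lookup_single when_def if_distrib sum.delta cong: if_cong)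

lemma single_one_eq_iff: "Poly_Mapping.single j (1::nat) = Poly_Mapping.single i 1 \<longleftrightarrow> j = i"
  by (metis lookup_single_eq lookup_single_not_eq zero_neq_one)

text \<open>An upper triangular \<open>h\<close> sends \<open>x\<^sub>i\<close> to \<open>h\<^sub>i\<^sub>i x\<^sub>i\<close> plus multiples of \<open>x\<^sub>j\<close>, \<open>j < i\<close>,
  which are heavier since \<open>w\<close> is decreasing.\<close>

lemma lowest_term_lin_form:
  fixes h :: "nat \<Rightarrow> nat \<Rightarrow> 'b::comm_ring_1"
  assumes ut: "upper_tri n h" and wd: "\<forall>i j. i < j \<and> j \<le> n \<longrightarrow> w j < w i" and i: "i \<le> n"
  shows "lowest_term n w (lin_form n h i) (Poly_Mapping.single i 1) (h i i)"
proof -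
  have lookup: "Poly_Mapping.lookup (lin_form n h i) C =
      (\<Sum>j\<le>n. if Poly_Mapping.single j 1 = C then h j i else 0)" for C
    unfolding lin_form_def
    by (simp add: lookup_sum lookup_const_mult var_def lookup_monom if_distrib cong: if_cong)
  have "Poly_Mapping.lookup (lin_form n h i) (Poly_Mapping.single i 1) = (\<Sum>j\<le>n. if j = i then h j i else 0)"
    unfolding lookup by (simp only: single_one_eq_iff)
  then have "Poly_Mapping.lookup (lin_form n h i) (Poly_Mapping.single i 1) = h i i"
    using i by simp
  moreover have "w i \<le> wdot n w C \<and> (wdot n w C = w i \<longrightarrow> C = Poly_Mapping.single i 1)"
    if "C \<in> Poly_Mapping.keys (lin_form n h i)" for C
  proof -
    have "(\<Sum>j\<le>n. if Poly_Mapping.single j 1 = C then h j i else 0) \<noteq> 0"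
      using that lookup[of C] by (simp add: in_keys_iff)
    then obtain j where "j \<in> {..n}" "(if Poly_Mapping.single j 1 = C then h j i else 0) \<noteq> 0"
      by (rule sum.not_neutral_contains_not_neutral)
    then have j: "j \<le> n" "Poly_Mapping.single j 1 = C" "h j i \<noteq> 0"
      by (auto split: if_splits)
    have "j \<le> i"
    proof (rule ccontr)
      assume "\<not> j \<le> i"
      then show False
        using ut j by (simp add: upper_tri_def)
    qed
    then have "j = i \<or> w i < w j"
      using wd i by (auto simp: le_less)
    then show ?thesis
      using j wdot_single[OF j(1), of w] by auto
  qed
  ultimately show ?thesis
    unfolding lowest_term_def wdot_single[OF i] by blast
qed

lemma lowest_term_mono_image:
  fixes h :: "nat \<Rightarrow> nat \<Rightarrow> 'b::comm_ring_1"
  assumes ut: "upper_tri n h" and wd: "\<forall>i j. i < j \<and> j \<le> n \<longrightarrow> w j < w i"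
    and B: "Poly_Mapping.keys B \<subseteq> {..n}"
  shows "lowest_term n w (mono_image n h B) B (\<Prod>i\<le>n. h i i ^ Poly_Mapping.lookup B i)"
proof -
  have "lowest_term n w (mono_image n h B)
      (\<Sum>i\<le>n. Poly_Mapping.single i (Poly_Mapping.lookup B i)) (\<Prod>i\<le>n. h i i ^ Poly_Mapping.lookup B i)"
    unfolding mono_image_def by (intro lowest_term_prod lowest_term_power lowest_term_lin_form[OF ut wd]) auto
  then show ?thesis
    by (simp add: sum_single_lookup[OF B])
qed

definition wedge_act_coeff :: "nat \<Rightarrow> nat \<Rightarrow> nat \<Rightarrow> (nat \<Rightarrow> nat \<Rightarrow> 'a::comm_ring_1) \<Rightarrow> mono set \<Rightarrow> mono set \<Rightarrow> 'a" where
  "wedge_act_coeff n m r h S C = wedge n m r (map (\<lambda>B. act n h (monom B)) (rep S)) C"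

lemma actW_eq_sum: "actW n m r h F C = (\<Sum>S\<in>states n m r. F S * wedge_act_coeff n m r h S C)"
  by (simp add: actW_def wedge_act_coeff_def)

lemma wedge_act_coeff_eq_mdet:
  assumes S: "S \<in> states n m r" and C: "C \<in> states n m r"
  shows "wedge_act_coeff n m r h S C =
    mdet r (\<lambda>i j. Poly_Mapping.lookup (mono_image n h (rep S ! i)) (rep C ! j))"
  using wedge_eq_mdet[OF C statesD(6)[OF S], of "\<lambda>B. act n h (monom B)"]
  by (simp add: wedge_act_coeff_def act_monom)

lemma sweight_le_of_nonzero_term:
  fixes h :: "nat \<Rightarrow> nat \<Rightarrow> 'a::comm_ring_1"
  assumes ut: "upper_tri n h" and wd: "\<forall>i j. i < j \<and> j \<le> n \<longrightarrow> w j < w i"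
    and S: "S \<in> states n m r" and C: "C \<in> states n m r" and \<sigma>: "\<sigma> permutes {..<r}"
    and nz: "(\<Prod>i<r. Poly_Mapping.lookup (mono_image n h (rep S ! i)) (rep C ! \<sigma> i)) \<noteq> 0"
  shows "sweight n w S \<le> sweight n w C \<and>
    (sweight n w S = sweight n w C \<longrightarrow> (\<forall>i<r. rep C ! \<sigma> i = rep S ! i))"
proof -
  let ?wd = "wdot n w"
  note S_props = statesD[OF S] and C_props = statesD[OF C]
  have each: "?wd (rep S ! i) \<le> ?wd (rep C ! \<sigma> i) \<and>
      (?wd (rep C ! \<sigma> i) = ?wd (rep S ! i) \<longrightarrow> rep C ! \<sigma> i = rep S ! i)" if i: "i < r" for i
  proof -
    have "rep C ! \<sigma> i \<in> Poly_Mapping.keys (mono_image n h (rep S ! i))"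
      using nz i by (metis in_keys_iff finite_lessThan lessThan_iff prod_zero)
    moreover have "Poly_Mapping.keys (rep S ! i) \<subseteq> {..n}"
      using S_props i nth_mem[of i "rep S"] by (auto simp: monos_deg_def)
    ultimately show ?thesis
      using lowest_term_mono_image[OF ut wd] by (auto simp: lowest_term_def)
  qed
  have sweight_S: "sweight n w S = (\<Sum>i<r. ?wd (rep S ! i))"
    using S_props sum_rep[of S r ?wd] by (simp add: sweight_def)
  have "sweight n w C = (\<Sum>j<r. ?wd (rep C ! j))"
    using C_props sum_rep[of C r ?wd] by (simp add: sweight_def)
  also have "\<dots> = (\<Sum>i<r. ?wd (rep C ! \<sigma> i))"
    using sum.permute[OF \<sigma>, of "\<lambda>j. ?wd (rep C ! j)"] by (simp add: comp_def)
  finally have sweight_C: "sweight n w C = (\<Sum>i<r. ?wd (rep C ! \<sigma> i))" .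
  have "sweight n w S \<le> sweight n w C"
    unfolding sweight_S sweight_C using each by (intro sum_mono) simp
  moreover have "rep C ! \<sigma> i = rep S ! i" if "sweight n w S = sweight n w C" "i < r" for i
  proof -
    have "(\<Sum>i<r. ?wd (rep C ! \<sigma> i) - ?wd (rep S ! i)) = 0"
      using that(1) unfolding sweight_S sweight_C by (simp add: sum_subtractf)
    then have "?wd (rep C ! \<sigma> i) - ?wd (rep S ! i) = 0"
      using each that(2) by (subst (asm) sum_nonneg_eq_0_iff) auto
    then show ?thesis
      using each that(2) by simp
  qed
  ultimately show ?thesis
    by blast
qed

lemma wedge_act_coeff_nonzero_sweight:
  fixes h :: "nat \<Rightarrow> nat \<Rightarrow> 'a::comm_ring_1"
  assumes ut: "upper_tri n h" and wd: "\<forall>i j. i < j \<and> j \<le> n \<longrightarrow> w j < w i"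
    and S: "S \<in> states n m r" and C: "C \<in> states n m r" and nz: "wedge_act_coeff n m r h S C \<noteq> 0"
  shows "sweight n w S \<le> sweight n w C \<and> (sweight n w S = sweight n w C \<longrightarrow> S = C)"
proof -
  have "mdet r (\<lambda>i j. Poly_Mapping.lookup (mono_image n h (rep S ! i)) (rep C ! j)) \<noteq> 0"
    using nz by (simp add: wedge_act_coeff_eq_mdet[OF S C])
  then obtain \<sigma> where "\<sigma> \<in> {\<sigma>. \<sigma> permutes {..<r}}" and
    "of_int (sign \<sigma>) * (\<Prod>i<r. Poly_Mapping.lookup (mono_image n h (rep S ! i)) (rep C ! \<sigma> i)) \<noteq> 0"
    unfolding mdet_def by (rule sum.not_neutral_contains_not_neutral)
  then have \<sigma>: "\<sigma> permutes {..<r}"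
    and nonzero_term: "(\<Prod>i<r. Poly_Mapping.lookup (mono_image n h (rep S ! i)) (rep C ! \<sigma> i)) \<noteq> 0"
    by auto
  note weight = sweight_le_of_nonzero_term[OF ut wd S C \<sigma> nonzero_term]
  have "S = C" if "sweight n w S = sweight n w C"
  proof -
    have same: "rep S ! i = rep C ! \<sigma> i" if "i < r" for i
      using weight \<open>sweight n w S = sweight n w C\<close> that by simp
    have "S = (!) (rep S) ` {..<r}"
      using bij_betw_nth_rep[of S r] statesD[OF S] by (simp add: bij_betw_def)
    also have "\<dots> = (!) (rep C) ` \<sigma> ` {..<r}"
      unfolding image_image using same by (intro image_cong) auto
    also have "\<dots> = C"
      using bij_betw_nth_rep[of C r] statesD[OF C] by (simp add: permutes_image[OF \<sigma>] bij_betw_def)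
    finally show ?thesis .
  qed
  then show ?thesis
    using weight by blast
qed

lemma permutes_eq_id_if_nth_eq:
  assumes "distinct xs" "length xs = r" "\<sigma> permutes {..<r}" "\<forall>i<r. xs ! \<sigma> i = xs ! i"
  shows "\<sigma> = id"
proof
  fix i
  show "\<sigma> i = id i"
  proof (cases "i < r")
    case True
    then have "\<sigma> i < r"
      using permutes_in_image[OF assms(3)] by simp
    then show ?thesis
      using assms True nth_eq_iff_index_eq[of xs "\<sigma> i" i] by simp
  qed (simp add: permutes_not_in[OF assms(3)])
qed

lemma wedge_act_coeff_diag_nonzero:
  fixes h :: "nat \<Rightarrow> nat \<Rightarrow> 'a::idom" and w :: "nat \<Rightarrow> int"
  assumes ut: "upper_tri n h" and wd: "\<forall>i j. i < j \<and> j \<le> n \<longrightarrow> w j < w i"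
    and C: "C \<in> states n m r" and diag: "\<And>k. k \<le> n \<Longrightarrow> h k k \<noteq> 0"
  shows "wedge_act_coeff n m r h C C \<noteq> 0"
proof -
  note C_props = statesD[OF C]
  let ?X = "\<lambda>i j. Poly_Mapping.lookup (mono_image n h (rep C ! i)) (rep C ! j)"
  have "mdet r ?X = (\<Prod>i<r. ?X i i)"
  proof (rule mdet_eq_prod_diag)
    fix \<sigma> assume \<sigma>: "\<sigma> permutes {..<r}" and "\<sigma> \<noteq> id"
    show "(\<Prod>i<r. ?X i (\<sigma> i)) = 0"
    proof (rule ccontr)
      assume "(\<Prod>i<r. ?X i (\<sigma> i)) \<noteq> 0"
      then have same: "\<forall>i<r. rep C ! \<sigma> i = rep C ! i"
        using sweight_le_of_nonzero_term[OF ut wd C C \<sigma>] by blast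
      then have "\<sigma> = id"
        using permutes_eq_id_if_nth_eq[OF _ _ \<sigma>] C_props by blast
      then show False
        using \<open>\<sigma> \<noteq> id\<close> by blast
    qed
  qed
  moreover have "?X i i \<noteq> 0" if "i < r" for i
  proof -
    have "Poly_Mapping.keys (rep C ! i) \<subseteq> {..n}"
      using C_props that nth_mem[of i "rep C"] by (auto simp: monos_deg_def)
    then have "?X i i = (\<Prod>k\<le>n. h k k ^ Poly_Mapping.lookup (rep C ! i) k)"
      using lowest_term_mono_image[OF ut wd] by (simp add: lowest_term_def)
    then show ?thesis
      using diag by simp
  qed
  ultimately show ?thesis
    by (simp add: wedge_act_coeff_eq_mdet[OF C C])
qed

lemma actW_wedge:
  fixes fs :: "'a::{idom,ring_char_0} mpoly list"
  assumes C: "C \<in> states n m r" and len: "length fs = r" and forms: "\<forall>f\<in>set fs. f \<in> forms n m"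
  shows "actW n m r h (wedge n m r (map (act n M) fs)) C = wedge n m r (map (act n (mmul n h M)) fs) C"
proof -
  let ?K = "monos_deg n m"
  have "wedge n m r (map (act n (mmul n h M)) fs) C =
      mdet r (\<lambda>i j. \<Sum>B\<in>?K. Poly_Mapping.lookup (act n M (fs ! i)) B *
        Poly_Mapping.lookup (act n h (monom B)) (rep C ! j))"
  proof (unfold wedge_eq_mdet[OF C len], rule mdet_cong)
    fix i j assume "i < r"
    then have "act n M (fs ! i) \<in> forms n m"
      using forms len by (simp add: act_in_forms)
    then have "Poly_Mapping.keys (act n M (fs ! i)) \<subseteq> ?K"
      by (simp add: forms_def)
    then show "Poly_Mapping.lookup (act n (mmul n h M) (fs ! i)) (rep C ! j) =
        (\<Sum>B\<in>?K. Poly_Mapping.lookup (act n M (fs ! i)) B * Poly_Mapping.lookup (act n h (monom B)) (rep C ! j))"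
      unfolding act_act[symmetric] by (rule lookup_act[OF finite_monos_deg])
  qed
  also have "\<dots> = (\<Sum>S | S \<subseteq> ?K \<and> card S = r.
      mdet r (\<lambda>i j. Poly_Mapping.lookup (act n M (fs ! i)) (rep S ! j)) *
      mdet r (\<lambda>i j. Poly_Mapping.lookup (act n h (monom (rep S ! i))) (rep C ! j)))"
    by (rule cauchy_binet[OF finite_monos_deg])
  also have "\<dots> = actW n m r h (wedge n m r (map (act n M) fs)) C"
    unfolding actW_def states_def
  proof (intro sum.cong refl)
    fix S assume "S \<in> {S. S \<subseteq> ?K \<and> card S = r}"
    then have S: "S \<in> states n m r"
      by (simp add: states_def)
    show "mdet r (\<lambda>i j. Poly_Mapping.lookup (act n M (fs ! i)) (rep S ! j)) *
        mdet r (\<lambda>i j. Poly_Mapping.lookup (act n h (monom (rep S ! i))) (rep C ! j)) =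
        wedge n m r (map (act n M) fs) S * wedge n m r (map (\<lambda>B. act n h (monom B)) (rep S)) C"
      using wedge_eq_mdet[OF S len, of "act n M"]
        wedge_eq_mdet[OF C statesD(6)[OF S], of "\<lambda>B. act n h (monom B)"] by simp
  qed
  finally show ?thesis ..
qed

section \<open>Laurent polynomials\<close>

text \<open>The coefficient of \<open>t\<^sup>k\<close> in \<open>\<Sum>i\<in>I. a i * t powi e i\<close>.\<close>

definition laurent_coeff :: "'i set \<Rightarrow> ('i \<Rightarrow> 'a::comm_monoid_add) \<Rightarrow> ('i \<Rightarrow> int) \<Rightarrow> int \<Rightarrow> 'a" where
  "laurent_coeff I a e k = (\<Sum>i\<in>{i\<in>I. e i = k}. a i)"

lemma laurent_eq_zero:
  fixes a :: "'i \<Rightarrow> 'a::field"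
  assumes "finite I" "\<And>k. laurent_coeff I a e k = 0"
  shows "(\<Sum>i\<in>I. a i * t powi e i) = 0"
proof -
  have "(\<Sum>i\<in>I. a i * t powi e i) = (\<Sum>k\<in>e ` I. \<Sum>i\<in>{i\<in>I. e i = k}. a i * t powi e i)"
    using assms(1) by (rule sum.image_gen)
  also have "\<dots> = (\<Sum>k\<in>e ` I. laurent_coeff I a e k * t powi k)"
    unfolding laurent_coeff_def by (intro sum.cong refl) (auto simp: sum_distrib_right)
  finally show ?thesis
    using assms(2) by simp
qed

text \<open>Multiplying by a power of \<open>t\<close> turns the Laurent polynomial into an ordinary one.\<close>

lemma laurent_zeros_finite:
  fixes a :: "'i \<Rightarrow> 'a::field"
  assumes fin: "finite I" and nz: "laurent_coeff I a e k \<noteq> 0"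
  shows "finite {t. t \<noteq> 0 \<and> (\<Sum>i\<in>I. a i * t powi e i) = 0}"
proof -
  define M where "M = (\<Sum>i\<in>I. \<bar>e i\<bar>)"
  have M: "e i + M \<ge> 0" if "i \<in> I" for i
    using member_le_sum[of i I "\<lambda>i. \<bar>e i\<bar>"] fin that by (simp add: M_def)
  define p where "p = (\<Sum>i\<in>I. Polynomial.monom (a i) (nat (e i + M)))"
  obtain i0 where "i0 \<in> {i\<in>I. e i = k}" "a i0 \<noteq> 0"
    using nz unfolding laurent_coeff_def by (rule sum.not_neutral_contains_not_neutral)
  then have kM: "k + M \<ge> 0"
    using M by force
  have "coeff p (nat (k + M)) = (\<Sum>i\<in>I. if e i = k then a i else 0)"
    unfolding p_def coeff_sum using M kM by (intro sum.cong refl) (auto simp: eq_nat_nat_iff)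
  also have "\<dots> = laurent_coeff I a e k"
    using fin by (simp add: laurent_coeff_def sum.inter_filter)
  finally have "p \<noteq> 0"
    using nz by auto
  moreover have "(\<Sum>i\<in>I. a i * t powi e i) = t powi (- M) * poly p t" if "t \<noteq> 0" for t
    unfolding p_def poly_sum sum_distrib_left
  proof (intro sum.cong refl)
    fix i assume "i \<in> I"
    then have "t powi e i = t powi (- M) * t ^ nat (e i + M)"
      using M[of i] that by (simp add: power_int_add[symmetric] power_int_of_nat[symmetric])
    then show "a i * t powi e i = t powi (- M) * poly (Polynomial.monom (a i) (nat (e i + M))) t"
      by (simp add: poly_monom mult_ac)
  qed
  ultimately show ?thesis
    by (intro finite_subset[OF _ poly_roots_finite[of p]]) auto
qed

lemma laurent_coeff_eq_zero_if_vanishing: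
  fixes a :: "'i \<Rightarrow> 'a::field"
  assumes "finite I" "infinite (UNIV :: 'a set)" "\<And>t. t \<noteq> 0 \<Longrightarrow> (\<Sum>i\<in>I. a i * t powi e i) = 0"
  shows "laurent_coeff I a e k = 0"
proof (rule ccontr)
  assume "laurent_coeff I a e k \<noteq> 0"
  then have "finite {t. t \<noteq> 0 \<and> (\<Sum>i\<in>I. a i * t powi e i) = 0}"
    by (rule laurent_zeros_finite[OF assms(1)])
  also have "{t. t \<noteq> 0 \<and> (\<Sum>i\<in>I. a i * t powi e i) = 0} = UNIV - {0}"
    using assms(3) by auto
  finally show False
    using assms(2) by simp
qed

section \<open>Support of the truncation\<close>

lemma wedge_eq_zero_if_generic_eq_zero:
  fixes fs :: "'a::field mpoly list"
  assumes g: "g \<in> U n m r fs" and len: "length fs = r" and c: "wedge n m r (map (act n g) fs) C = 0"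
  shows "wedge n m r (map (act n M) fs) C = 0"
proof -
  let ?P = "wedge n m r (map (\<lambda>f. act n Gmat (Poly_Mapping.map gconst f)) fs) C"
  have "?P = 0"
    using g c geval_wedge_generic[OF len, of g] by (auto simp: U_def Let_def)
  then show ?thesis
    using geval_wedge_generic[OF len, of M n m C] by (simp add: ring_hom.hom_zero[OF ring_hom_geval])
qed

context
  fixes n m r :: nat and fs :: "'a::field_char_0 mpoly list" and w :: "nat \<Rightarrow> int"
    and h g :: "nat \<Rightarrow> nat \<Rightarrow> 'a"
  assumes len: "length fs = r" and forms: "\<forall>f\<in>set fs. f \<in> forms n m"
    and wd: "\<forall>i j. i < j \<and> j \<le> n \<longrightarrow> w j < w i"
    and h: "h \<in> GL n" "upper_tri n h" and g: "g \<in> U n m r fs"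
begin

lemma actW_trunc_wedge_lam:
  assumes "t \<noteq> 0"
  shows "actW n m r h (trunc n w N (wedge n m r (map (act n (mmul n (lam w t) g)) fs))) C =
    (\<Sum>S\<in>states n m r. (if N \<le> sweight n w S
      then wedge n m r (map (act n g) fs) S * wedge_act_coeff n m r h S C else 0) * t powi (- sweight n w S))"
  unfolding actW_eq_sum by (intro sum.cong refl) (simp add: trunc_def wedge_lam[OF assms len forms] mult_ac)

lemma actW_trunc_zeros_finite:
  assumes C: "C \<in> states n m r" and N: "N \<le> sweight n w C" and c: "wedge n m r (map (act n g) fs) C \<noteq> 0"
  shows "finite {t. t \<noteq> 0 \<and>
    actW n m r h (trunc n w N (wedge n m r (map (act n (mmul n (lam w t) g)) fs))) C = 0}"
proof -
  define b where "b S = (if N \<le> sweight n w S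
    then wedge n m r (map (act n g) fs) S * wedge_act_coeff n m r h S C else 0)" for S
  have "laurent_coeff (states n m r) b (\<lambda>S. - sweight n w S) (- sweight n w C) = (\<Sum>S\<in>{C}. b S)"
    unfolding laurent_coeff_def
  proof (rule sum.mono_neutral_right)
    show "\<forall>S\<in>{S \<in> states n m r. - sweight n w S = - sweight n w C} - {C}. b S = 0"
      using wedge_act_coeff_nonzero_sweight[OF h(2) wd _ C] by (auto simp: b_def)
  qed (use C finite_states in auto)
  also have "\<dots> \<noteq> 0"
    using N c wedge_act_coeff_diag_nonzero[OF h(2) wd C] upper_tri_diag_nonzero[OF h] by (simp add: b_def)
  finally have "finite {t. t \<noteq> 0 \<and> (\<Sum>S\<in>states n m r. b S * t powi (- sweight n w S)) = 0}"
    by (rule laurent_zeros_finite[OF finite_states])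
  then show ?thesis
    by (rule back_subst[where P = finite]) (auto simp: actW_trunc_wedge_lam b_def)
qed

lemma actW_trunc_eq_zero:
  assumes C: "C \<in> states n m r" and t: "t \<noteq> 0"
    and degenerate: "\<not> (N \<le> sweight n w C \<and> wedge n m r (map (act n g) fs) C \<noteq> 0)"
  shows "actW n m r h (trunc n w N (wedge n m r (map (act n (mmul n (lam w t) g)) fs))) C = 0"
proof -
  define a where "a S = wedge n m r (map (act n g) fs) S * wedge_act_coeff n m r h S C" for S
  define b where "b S = (if N \<le> sweight n w S then a S else 0)" for S
  have "laurent_coeff (states n m r) b (\<lambda>S. - sweight n w S) k = 0" for k
  proof (cases "N \<le> sweight n w C")
    case True
    then have c: "wedge n m r (map (act n g) fs) C = 0"
      using degenerate by blast
    have "(\<Sum>S\<in>states n m r. a S * s powi (- sweight n w S)) = 0" if "s \<noteq> 0" for s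
    proof -
      have "(\<Sum>S\<in>states n m r. a S * s powi (- sweight n w S)) =
          actW n m r h (wedge n m r (map (act n (mmul n (lam w s) g)) fs)) C"
        unfolding actW_eq_sum a_def by (intro sum.cong refl) (simp add: wedge_lam[OF that len forms])
      also have "\<dots> = 0"
        using actW_wedge[OF C len forms] wedge_eq_zero_if_generic_eq_zero[OF g len c] by simp
      finally show ?thesis .
    qed
    then have "laurent_coeff (states n m r) a (\<lambda>S. - sweight n w S) k = 0"
      by (intro laurent_coeff_eq_zero_if_vanishing finite_states infinite_UNIV_char_0)
    moreover have "laurent_coeff (states n m r) b (\<lambda>S. - sweight n w S) k =
        (\<Sum>S\<in>{S \<in> states n m r. - sweight n w S = k}. if N \<le> - k then a S else 0)"
      unfolding laurent_coeff_def b_def by (intro sum.cong refl) auto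
    ultimately show ?thesis
      by (cases "N \<le> - k") (simp_all add: laurent_coeff_def)
  next
    case False
    then have "b S = 0" if "S \<in> states n m r" for S
      using wedge_act_coeff_nonzero_sweight[OF h(2) wd that C] by (force simp: b_def a_def)
    then show ?thesis
      by (simp add: laurent_coeff_def)
  qed
  then have "(\<Sum>S\<in>states n m r. b S * t powi (- sweight n w S)) = 0"
    by (rule laurent_eq_zero[OF finite_states])
  then show ?thesis
    unfolding actW_trunc_wedge_lam[OF t] b_def a_def .
qed

lemma finite_support_change_at_state:
  assumes C: "C \<in> states n m r"
  shows "finite {t. t \<noteq> 0 \<and>
    (actW n m r h (trunc n w N (wedge n m r (map (act n (mmul n (lam w t) g)) fs))) C \<noteq> 0) \<noteq>
    (trunc n w N (wedge n m r (map (act n (mmul n (lam w t) g)) fs)) C \<noteq> 0)}"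
proof (cases "N \<le> sweight n w C \<and> wedge n m r (map (act n g) fs) C \<noteq> 0")
  case True
  then have "{t. t \<noteq> 0 \<and>
      (actW n m r h (trunc n w N (wedge n m r (map (act n (mmul n (lam w t) g)) fs))) C \<noteq> 0) \<noteq>
      (trunc n w N (wedge n m r (map (act n (mmul n (lam w t) g)) fs)) C \<noteq> 0)} \<subseteq>
    {t. t \<noteq> 0 \<and> actW n m r h (trunc n w N (wedge n m r (map (act n (mmul n (lam w t) g)) fs))) C = 0}"
    using wedge_lam[OF _ len forms] by (auto simp: trunc_def)
  then show ?thesis
    using actW_trunc_zeros_finite[OF C] True by (blast intro: finite_subset)
next
  case False
  have "trunc n w N (wedge n m r (map (act n (mmul n (lam w t) g)) fs)) C = 0" if "t \<noteq> 0" for t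
    using False wedge_lam[OF that len forms] by (auto simp: trunc_def)
  then show ?thesis
    using actW_trunc_eq_zero[OF C _ False] by (simp cong: conj_cong)
qed

end

theorem mainTheorem9:
  fixes n m r :: nat and fs :: "('a::field_char_0) mpoly list"
    and w :: "nat \<Rightarrow> int" and h g :: "nat \<Rightarrow> nat \<Rightarrow> 'a" and N :: int
  assumes "algebraically_closed TYPE('a)"
    and "length fs = r" and "\<forall>f\<in>set fs. f \<in> forms n m"
    and "\<forall>i j. i < j \<and> j \<le> n \<longrightarrow> w j < w i"
    and "distinguishes n w (r * m)"
    and "h \<in> GL n" and "upper_tri n h"
    and "g \<in> U n m r fs"
  shows "finite {t::'a. t \<noteq> 0 \<and>
     supp n m r (actW n m r h (trunc n w N (wedge n m r (map (act n (mmul n (lam w t) g)) fs))))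
       \<noteq> supp n m r (trunc n w N (wedge n m r (map (act n (mmul n (lam w t) g)) fs)))}"
proof -
  let ?F = "\<lambda>t. trunc n w N (wedge n m r (map (act n (mmul n (lam w t) g)) fs))"
  have "{t. t \<noteq> 0 \<and> supp n m r (actW n m r h (?F t)) \<noteq> supp n m r (?F t)} \<subseteq>
      (\<Union>C\<in>states n m r. {t. t \<noteq> 0 \<and> (actW n m r h (?F t) C \<noteq> 0) \<noteq> (?F t C \<noteq> 0)})"
    by (auto simp: supp_def)
  moreover have "finite (\<Union>C\<in>states n m r. {t. t \<noteq> 0 \<and> (actW n m r h (?F t) C \<noteq> 0) \<noteq> (?F t C \<noteq> 0)})"
    using finite_support_change_at_state[OF assms(2-4,6-8)] finite_states by blast
  ultimately show ?thesis
    by (rule finite_subset)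
qed

end
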